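(* For every $\mathcal{ALC}$-formula $\varphi$ and every interpretation $M$: $\mathrm{Mod}(\mathcal{E}(\varphi,M))=\mathrm{Mod}(\varphi)\cup[M]_\varphi$.
   Context: $\mathcal{ALC}$ concepts: $C::=A\mid\neg C\mid(C\sqcap C)\mid\exists r.C$. $\mathcal{ALC}$-formulae: $\phi::=\alpha\mid\neg\phi\mid(\phi\wedge\phi)$, atomic $\alpha::=C(a)\mid r(a,b)\mid(C=\top)$; $\neg\neg\psi$ identified with $\psi$; $\vee$ usual abbreviation. A literal is an atomic formula or its negation. Interpretations: countable nonempty domain, standard semantics. $\mathrm{Mod}(\varphi)$: set of interpretations satisfying $\varphi$. $\mathrm{Sub}(\alpha)=\mathrm{Sub}(\neg\alpha)=\{\alpha,\neg\alpha\}$ for atomic $\alpha$; $\mathrm{Sub}(\psi\wedge\psi')=\mathrm{Sub}(\neg(\psi\wedge\psi'))=\{\psi\wedge\psi',\neg(\psi\wedge\psi')\}\cup\mathrm{Sub}(\psi)\cup\mathrm{Sub}(\psi')$. $\mathrm{con}(\varphi)$: smallest set of concepts containing $C$ whenever $(C=\top)$ or $C(a)$ lies in $\mathrm{Sub}(\varphi)$, closed under subconcepts of $\sqcap$, $\exists r.\cdot$, and under single negation. For an interpretation $I$, $\mathrm{qm}(\varphi,I)=(T,o,f)$ with $T=\{c(x)\mid x\in\Delta^I\}$, $c(x)=\{C\in\mathrm{con}(\varphi)\mid x\in C^I\}$, $o(a)=c(a^I)$ for individuals $a$ in $\varphi$, $f=\{\psi\in\mathrm{Sub}(\varphi)\mid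 I\models\psi\}$. $\mathrm{lit}(f)$: literals in $f$. $\mathcal{E}(\varphi,M)=\varphi$ if $M\models\varphi$, and $\mathcal{E}(\varphi,M)=\varphi\vee\bigwedge\mathrm{lit}(f)$ otherwise, where $\mathrm{qm}(\neg\varphi,M)=(T,o,f)$. $\mathcal{L}_{lit}(\varphi)$: Boolean combinations of atomic formulae occurring in $\varphi$; $M'\equiv_\varphi M$ iff they satisfy the same formulae of $\mathcal{L}_{lit}(\varphi)$; $[M]_\varphi=\{M'\mid M'\equiv_\varphi M\}$. *)

theory Defs
  imports Main "HOL-Library.Countable_Set"
begin

datatype ('c, 'r) concept =
    CAtom 'c
  | CNeg "('c, 'r) concept"
  | CAnd "('c, 'r) concept" "('c, 'r) concept"
  | CEx 'r "('c, 'r) concept"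

datatype ('c, 'r, 'i) fml =
    FConc "('c, 'r) concept" 'i
  | FRole 'r 'i 'i
  | FTop "('c, 'r) concept"               \<comment> \<open>(C = \<top>)\<close>
  | FNeg "('c, 'r, 'i) fml"
  | FAnd "('c, 'r, 'i) fml" "('c, 'r, 'i) fml"

definition FOr :: "('c,'r,'i) fml \<Rightarrow> ('c,'r,'i) fml \<Rightarrow> ('c,'r,'i) fml" where
  "FOr p q = FNeg (FAnd (FNeg p) (FNeg q))"

fun is_atomic :: "('c,'r,'i) fml \<Rightarrow> bool" where
  "is_atomic (FConc C a) = True"
| "is_atomic (FRole r a b) = True"
| "is_atomic (FTop C) = True"
| "is_atomic _ = False"

definition is_literal :: "('c,'r,'i) fml \<Rightarrow> bool" where
  "is_literal p \<longleftrightarrow> is_atomic p \<or> (\<exists>q. p = FNeg q \<and> is_atomic q)"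

record ('c, 'r, 'i, 'd) interp =
  dom  :: "'d set"
  cext :: "'c \<Rightarrow> 'd set"
  rext :: "'r \<Rightarrow> ('d \<times> 'd) set"
  iext :: "'i \<Rightarrow> 'd"

definition is_interp :: "('c,'r,'i,'d) interp \<Rightarrow> bool" where
  "is_interp I \<longleftrightarrow> dom I \<noteq> {} \<and> countable (dom I)
     \<and> (\<forall>A. cext I A \<subseteq> dom I) \<and> (\<forall>r. rext I r \<subseteq> dom I \<times> dom I)
     \<and> (\<forall>a. iext I a \<in> dom I)"

fun cint :: "('c,'r,'i,'d) interp \<Rightarrow> ('c,'r) concept \<Rightarrow> 'd set" where
  "cint I (CAtom A) = cext I A"
| "cint I (CNeg C) = dom I - cint I C"
| "cint I (CAnd C D) = cint I C \<inter> cint I D"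
| "cint I (CEx r C) = {x \<in> dom I. \<exists>y. (x, y) \<in> rext I r \<and> y \<in> cint I C}"

fun sat :: "('c,'r,'i,'d) interp \<Rightarrow> ('c,'r,'i) fml \<Rightarrow> bool" where
  "sat I (FConc C a) \<longleftrightarrow> iext I a \<in> cint I C"
| "sat I (FRole r a b) \<longleftrightarrow> (iext I a, iext I b) \<in> rext I r"
| "sat I (FTop C) \<longleftrightarrow> cint I C = dom I"
| "sat I (FNeg p) \<longleftrightarrow> \<not> sat I p"
| "sat I (FAnd p q) \<longleftrightarrow> sat I p \<and> sat I q"

definition Mod :: "('c,'r,'i) fml \<Rightarrow> ('c,'r,'i,'d) interp set" where
  "Mod p = {I. is_interp I \<and> sat I p}"

text \<open>Since \<not>\<not>\<psi> is identified with \<psi>, Sub(\<not>\<psi>) = Sub(\<psi>) for every \<psi>.\<close>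
fun Sub :: "('c,'r,'i) fml \<Rightarrow> ('c,'r,'i) fml set" where
  "Sub (FConc C a) = {FConc C a, FNeg (FConc C a)}"
| "Sub (FRole r a b) = {FRole r a b, FNeg (FRole r a b)}"
| "Sub (FTop C) = {FTop C, FNeg (FTop C)}"
| "Sub (FNeg p) = Sub p"
| "Sub (FAnd p q) = {FAnd p q, FNeg (FAnd p q)} \<union> Sub p \<union> Sub q"

inductive_set con :: "('c,'r,'i) fml \<Rightarrow> ('c,'r) concept set" for p where
  top_in: "FTop C \<in> Sub p \<Longrightarrow> C \<in> con p"
| conc_in: "FConc C a \<in> Sub p \<Longrightarrow> C \<in> con p"
| and1: "CAnd C D \<in> con p \<Longrightarrow> C \<in> con p"
| and2: "CAnd C D \<in> con p \<Longrightarrow> D \<in> con p"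
| ex: "CEx r C \<in> con p \<Longrightarrow> C \<in> con p"
| neg_sub: "CNeg C \<in> con p \<Longrightarrow> C \<in> con p"
| neg: "C \<in> con p \<Longrightarrow> (\<forall>D. C \<noteq> CNeg D) \<Longrightarrow> CNeg C \<in> con p"

fun inds :: "('c,'r,'i) fml \<Rightarrow> 'i set" where
  "inds (FConc C a) = {a}"
| "inds (FRole r a b) = {a, b}"
| "inds (FTop C) = {}"
| "inds (FNeg p) = inds p"
| "inds (FAnd p q) = inds p \<union> inds q"

definition ctype :: "('c,'r,'i) fml \<Rightarrow> ('c,'r,'i,'d) interp \<Rightarrow> 'd \<Rightarrow> ('c,'r) concept set" where
  "ctype p I x = {C \<in> con p. x \<in> cint I C}"

definition qm :: "('c,'r,'i) fml \<Rightarrow> ('c,'r,'i,'d) interp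
   \<Rightarrow> ('c,'r) concept set set \<times> ('i \<Rightarrow> ('c,'r) concept set option) \<times> ('c,'r,'i) fml set" where
  "qm p I = ({ctype p I x | x. x \<in> dom I},
             (\<lambda>a. if a \<in> inds p then Some (ctype p I (iext I a)) else None),
             {q \<in> Sub p. sat I q})"

definition lit :: "('c,'r,'i) fml set \<Rightarrow> ('c,'r,'i) fml set" where
  "lit F = {q \<in> F. is_literal q}"

text \<open>Conjunction of a list of formulas (the empty conjunction is a tautology).\<close>
fun conj_list :: "('c,'r,'i) fml list \<Rightarrow> ('c,'r,'i) fml" where
  "conj_list [] = FNeg (FAnd (FRole undefined undefined undefined)
                             (FNeg (FRole undefined undefined undefined)))"
| "conj_list [q] = q"
| "conj_list (q # qs) = FAnd q (conj_list qs)"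

definition Conj :: "('c,'r,'i) fml set \<Rightarrow> ('c,'r,'i) fml" where
  "Conj S = conj_list (SOME xs. set xs = S \<and> distinct xs)"

definition E :: "('c,'r,'i) fml \<Rightarrow> ('c,'r,'i,'d) interp \<Rightarrow> ('c,'r,'i) fml" where
  "E p M = (if sat M p then p
            else (case qm (FNeg p) M of (T, ov, f) \<Rightarrow> FOr p (Conj (lit f))))"

inductive_set Llit :: "('c,'r,'i) fml \<Rightarrow> ('c,'r,'i) fml set" for p where
  atom: "q \<in> Sub p \<Longrightarrow> is_atomic q \<Longrightarrow> q \<in> Llit p"
| neg: "q \<in> Llit p \<Longrightarrow> FNeg q \<in> Llit p"
| conj: "q \<in> Llit p \<Longrightarrow> q' \<in> Llit p \<Longrightarrow> FAnd q q' \<in> Llit p"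

definition equiv_phi :: "('c,'r,'i) fml \<Rightarrow> ('c,'r,'i,'d) interp \<Rightarrow> ('c,'r,'i,'d) interp \<Rightarrow> bool" where
  "equiv_phi p M' M \<longleftrightarrow> (\<forall>q \<in> Llit p. sat M' q \<longleftrightarrow> sat M q)"

definition eqclass :: "('c,'r,'i,'d) interp \<Rightarrow> ('c,'r,'i) fml \<Rightarrow> ('c,'r,'i,'d) interp set" where
  "eqclass M p = {M'. is_interp M' \<and> equiv_phi p M' M}"

end

theory Submission
  imports Defs
begin

(* If M satisfies \<phi>, every M' equivalent to M over \<phi> satisfies \<phi> as well, because \<phi> itself
   lies in L_lit(\<phi>). Otherwise the literals of Sub(\<phi>) true in M form a complete atomic diagram of
   M over the atoms of \<phi>: an interpretation satisfies their conjunction exactly when it agrees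
   with M on these atoms, i.e. on all of L_lit(\<phi>). *)

lemma sat_FOr [simp]: "sat I (FOr p q) \<longleftrightarrow> sat I p \<or> sat I q"
  by (simp add: FOr_def)

lemma sat_conj_list: "sat I (conj_list xs) \<longleftrightarrow> (\<forall>q\<in>set xs. sat I q)"
  by (induction xs rule: conj_list.induct) auto

lemma sat_Conj:
  assumes "finite S"
  shows "sat I (Conj S) \<longleftrightarrow> (\<forall>q\<in>S. sat I q)"
proof -
  have "\<exists>xs. set xs = S \<and> distinct xs"
    using assms finite_distinct_list by blast
  then have "set (SOME xs. set xs = S \<and> distinct xs) = S"
    by (rule someI2_ex) auto
  then show ?thesis
    unfolding Conj_def by (simp add: sat_conj_list)
qed

lemma finite_Sub: "finite (Sub p)"
  by (induction p) auto

lemma atomic_in_Sub_iff_FNeg_in_Sub: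
  assumes "is_atomic a"
  shows "a \<in> Sub p \<longleftrightarrow> FNeg a \<in> Sub p"
  using assms by (induction p) (auto elim: is_atomic.elims)

lemma Llit_if_Sub_subset: "Sub q \<subseteq> Sub p \<Longrightarrow> q \<in> Llit p"
proof (induction q)
  case (FNeg q)
  then show ?case by (auto intro: Llit.neg)
next
  case (FAnd q1 q2)
  then show ?case by (auto intro: Llit.conj)
qed (auto intro: Llit.atom)

lemma self_in_Llit: "p \<in> Llit p"
  by (rule Llit_if_Sub_subset) simp

lemma equiv_phi_iff_agree_on_atoms:
  "equiv_phi p M' M \<longleftrightarrow> (\<forall>a\<in>Sub p. is_atomic a \<longrightarrow> (sat M' a \<longleftrightarrow> sat M a))"
proof
  assume "equiv_phi p M' M"
  then show "\<forall>a\<in>Sub p. is_atomic a \<longrightarrow> (sat M' a \<longleftrightarrow> sat M a)"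
    unfolding equiv_phi_def by (blast intro: Llit.atom)
next
  assume agree: "\<forall>a\<in>Sub p. is_atomic a \<longrightarrow> (sat M' a \<longleftrightarrow> sat M a)"
  have "sat M' q \<longleftrightarrow> sat M q" if "q \<in> Llit p" for q
    using that by (induction q rule: Llit.induct) (use agree in auto)
  then show "equiv_phi p M' M"
    unfolding equiv_phi_def by blast
qed

lemma sat_lit_of_Sub_iff_equiv_phi:
  "(\<forall>q\<in>lit {q\<in>Sub p. sat M q}. sat M' q) \<longleftrightarrow> equiv_phi p M' M"
proof -
  have "(\<forall>q\<in>lit {q\<in>Sub p. sat M q}. sat M' q)
        \<longleftrightarrow> (\<forall>a\<in>Sub p. is_atomic a \<longrightarrow> (sat M' a \<longleftrightarrow> sat M a))"
    unfolding lit_def is_literal_def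
    using atomic_in_Sub_iff_FNeg_in_Sub by fastforce
  then show ?thesis
    by (simp add: equiv_phi_iff_agree_on_atoms)
qed

lemma E_if_not_sat:
  assumes "\<not> sat M p"
  shows "E p M = FOr p (Conj (lit {q\<in>Sub p. sat M q}))"
  using assms unfolding E_def qm_def by simp

theorem mainTheorem5:
  fixes p :: "('c,'r,'i) fml" and M :: "('c,'r,'i,'d) interp"
  assumes "is_interp M"
  shows "Mod (E p M) = Mod p \<union> eqclass M p"
proof (cases "sat M p")
  case True
  then have "eqclass M p \<subseteq> Mod p"
    using self_in_Llit[of p] unfolding eqclass_def Mod_def equiv_phi_def by auto
  then show ?thesis
    using True unfolding E_def by auto
next
  case False
  have "finite (lit {q\<in>Sub p. sat M q})"
    unfolding lit_def using finite_Sub[of p] by simp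
  then show ?thesis
    unfolding E_if_not_sat[OF False] Mod_def eqclass_def
    by (auto simp: sat_Conj sat_lit_of_Sub_iff_equiv_phi)
qed

end
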